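(* Fix any $H\ge2$. For any offline algorithm $\mathrm{Algo}$ (mapping datasets to policies) and any coefficients $\{\kappa_h\}_{h\ge1}$ with $\kappa_h\ge2$, there exist a linear MDP $\mathcal{M}=(\mathcal{S},\mathcal{A},H,\mathbb{P},r,d_0)$ with positive minimum sub-optimality gap $\Delta_{\min}>0$ and a behavior policy $\mu$ generating a dataset $\mathcal{D}=\{(s_h^t,a_h^t,r_h^t)\}_{h\in[H]}^{t\in[K]}\sim\mathcal{P}(\cdot\mid\mathcal{M},\mu)$ with $\sup_{s_h,a_h}\frac{d^{\mathcal{M},*}_h(s_h,a_h)}{d^{\mathcal{M},\mu}_h(s_h,a_h)}\le\kappa_h$ for all $h\in[H]$, such that \[ \mathbb{E}_{\mathcal{D}\sim\mathcal{M}}[\mathrm{SubOpt}(\mathrm{Algo}(\mathcal{D});\mathcal{M})]=\Omega\Big(\frac{\kappa_{\min}H^2}{K\Delta_{\min}}\Big), \] where $\kappa_{\min}=\min\{\kappa_h:h\in[H]\}$.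
   Context: Episodic MDP with horizon $H$, initial distribution $d_0$, transitions $\mathbb{P}_h$, mean rewards $r_h\in[0,1]$. For a policy $\pi$, $V^\pi_h,Q^\pi_h$ are its value functions and $V^*,Q^*$ the optimal ones; $d^{\mathcal{M},\pi}_h(s,a)$ is the state-action visitation density at step $h$ under $\pi$ in $\mathcal{M}$, and $d^{\mathcal{M},*}_h$ that of an optimal policy. $\mathrm{SubOpt}(\pi;\mathcal{M})=\mathbb{E}_{s\sim d_0}[V^*_1(s)-V^\pi_1(s)]$. Linear MDP: there are known features $\phi_h:\mathcal{S}\times\mathcal{A}\to\mathbb{R}^d$, $\|\phi_h\|_2\le1$, with $r_h(s,a)=\phi_h(s,a)^T\theta_h$ and $\mathbb{P}_h(s'|s,a)=\phi_h(s,a)^T\mu_h(s')$. Sub-optimality gaps $\Delta_h(s,a)=V^*_h(s)-Q^*_h(s,a)$, $\Delta_{\min}=\min_{s,a,h}\{\Delta_h(s,a):\Delta_h(s,a)\neq0\}$. The dataset consists of $K$ episodes of trajectories generated by running $\mu$ in $\mathcal{M}$. *)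

theory Defs
  imports "HOL-Probability.Probability"
begin

text \<open>Episodic MDP over countable state and action spaces (both encoded as nat).
  Steps are indexed h = 1..H. Rewards are random (reward distribution rew),
  mean rewards are their expectations.\<close>

record mdp =
  init  :: "nat pmf"
  trans :: "nat \<Rightarrow> nat \<Rightarrow> nat \<Rightarrow> nat pmf"
  rew   :: "nat \<Rightarrow> nat \<Rightarrow> nat \<Rightarrow> real pmf"

text \<open>Markov (possibly stochastic) policies: \<pi> h s is a distribution over actions.\<close>
type_synonym policy = "nat \<Rightarrow> nat \<Rightarrow> nat pmf"

type_synonym dataset = "(nat \<times> nat \<times> real) list list"

definition mean_rew :: "mdp \<Rightarrow> nat \<Rightarrow> nat \<Rightarrow> nat \<Rightarrow> real" where
  "mean_rew M h s a = measure_pmf.expectation (rew M h s a) (\<lambda>x. x)"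

text \<open>Value of policy \<pi> with k steps to go (current step H - k + 1).\<close>
fun Vpi_aux :: "nat \<Rightarrow> mdp \<Rightarrow> policy \<Rightarrow> nat \<Rightarrow> nat \<Rightarrow> real" where
  "Vpi_aux H M \<pi> 0 s = 0"
| "Vpi_aux H M \<pi> (Suc k) s =
     measure_pmf.expectation (\<pi> (H - k) s)
       (\<lambda>a. mean_rew M (H - k) s a
             + measure_pmf.expectation (trans M (H - k) s a) (Vpi_aux H M \<pi> k))"

definition Vpi :: "nat \<Rightarrow> mdp \<Rightarrow> policy \<Rightarrow> nat \<Rightarrow> nat \<Rightarrow> real" where
  "Vpi H M \<pi> h s = Vpi_aux H M \<pi> (H + 1 - h) s"

definition Qpi :: "nat \<Rightarrow> mdp \<Rightarrow> policy \<Rightarrow> nat \<Rightarrow> nat \<Rightarrow> nat \<Rightarrow> real" where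
  "Qpi H M \<pi> h s a = mean_rew M h s a + measure_pmf.expectation (trans M h s a) (Vpi H M \<pi> (h + 1))"

fun Vstar_aux :: "nat \<Rightarrow> mdp \<Rightarrow> nat \<Rightarrow> nat \<Rightarrow> real" where
  "Vstar_aux H M 0 s = 0"
| "Vstar_aux H M (Suc k) s =
     (SUP a. mean_rew M (H - k) s a
             + measure_pmf.expectation (trans M (H - k) s a) (Vstar_aux H M k))"

definition Vstar :: "nat \<Rightarrow> mdp \<Rightarrow> nat \<Rightarrow> nat \<Rightarrow> real" where
  "Vstar H M h s = Vstar_aux H M (H + 1 - h) s"

definition Qstar :: "nat \<Rightarrow> mdp \<Rightarrow> nat \<Rightarrow> nat \<Rightarrow> nat \<Rightarrow> real" where
  "Qstar H M h s a = mean_rew M h s a + measure_pmf.expectation (trans M h s a) (Vstar H M (h + 1))"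

definition gap :: "nat \<Rightarrow> mdp \<Rightarrow> nat \<Rightarrow> nat \<Rightarrow> nat \<Rightarrow> real" where
  "gap H M h s a = Vstar H M h s - Qstar H M h s a"

definition gap_set :: "nat \<Rightarrow> mdp \<Rightarrow> real set" where
  "gap_set H M = {gap H M h s a | h s a. h \<in> {1..H} \<and> gap H M h s a \<noteq> 0}"

definition min_gap :: "nat \<Rightarrow> mdp \<Rightarrow> real" where
  "min_gap H M = Inf (gap_set H M)"

definition SubOpt :: "nat \<Rightarrow> mdp \<Rightarrow> policy \<Rightarrow> real" where
  "SubOpt H M \<pi> = measure_pmf.expectation (init M) (\<lambda>s. Vstar H M 1 s - Vpi H M \<pi> 1 s)"

definition optimal_policy :: "nat \<Rightarrow> mdp \<Rightarrow> policy \<Rightarrow> bool" where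
  "optimal_policy H M \<pi> \<longleftrightarrow> SubOpt H M \<pi> = 0"

text \<open>sdist M \<pi> n is the state distribution at step n + 1.\<close>
fun sdist :: "mdp \<Rightarrow> policy \<Rightarrow> nat \<Rightarrow> nat pmf" where
  "sdist M \<pi> 0 = init M"
| "sdist M \<pi> (Suc n) =
     bind_pmf (sdist M \<pi> n) (\<lambda>s. bind_pmf (\<pi> (Suc n) s) (\<lambda>a. trans M (Suc n) s a))"

definition visit :: "mdp \<Rightarrow> policy \<Rightarrow> nat \<Rightarrow> nat \<Rightarrow> nat \<Rightarrow> real" where
  "visit M \<pi> h s a = pmf (sdist M \<pi> (h - 1)) s * pmf (\<pi> h s) a"

definition linear_mdp :: "nat \<Rightarrow> mdp \<Rightarrow> bool" where
  "linear_mdp H M \<longleftrightarrow>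
     (\<forall>h\<in>{1..H}. \<forall>s a. set_pmf (rew M h s a) \<subseteq> {0..1}) \<and>
     (\<exists>(d::nat) (\<phi>::nat \<Rightarrow> nat \<Rightarrow> nat \<Rightarrow> nat \<Rightarrow> real) (\<theta>::nat \<Rightarrow> nat \<Rightarrow> real)
        (\<nu>::nat \<Rightarrow> nat \<Rightarrow> nat \<Rightarrow> real).
        \<forall>h\<in>{1..H}. \<forall>s a.
          sqrt (\<Sum>i<d. (\<phi> h s a i)\<^sup>2) \<le> 1 \<and>
          mean_rew M h s a = (\<Sum>i<d. \<phi> h s a i * \<theta> h i) \<and>
          (\<forall>s'. pmf (trans M h s a) s' = (\<Sum>i<d. \<phi> h s a i * \<nu> h s' i)))"

fun traj :: "mdp \<Rightarrow> policy \<Rightarrow> nat \<Rightarrow> nat \<Rightarrow> nat \<Rightarrow> (nat \<times> nat \<times> real) list pmf" where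
  "traj M mu h 0 s = return_pmf []"
| "traj M mu h (Suc k) s =
     bind_pmf (mu h s) (\<lambda>a.
     bind_pmf (rew M h s a) (\<lambda>r.
     bind_pmf (trans M h s a) (\<lambda>s'.
     map_pmf (\<lambda>rest. (s, a, r) # rest) (traj M mu (Suc h) k s'))))"

definition episode :: "nat \<Rightarrow> mdp \<Rightarrow> policy \<Rightarrow> (nat \<times> nat \<times> real) list pmf" where
  "episode H M mu = bind_pmf (init M) (traj M mu 1 H)"

fun iid_pmf :: "'x pmf \<Rightarrow> nat \<Rightarrow> 'x list pmf" where
  "iid_pmf p 0 = return_pmf []"
| "iid_pmf p (Suc K) = bind_pmf p (\<lambda>x. map_pmf (Cons x) (iid_pmf p K))"

definition data_dist :: "nat \<Rightarrow> nat \<Rightarrow> mdp \<Rightarrow> policy \<Rightarrow> dataset pmf" where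
  "data_dist H K M mu = iid_pmf (episode H M mu) K"

end

theory Submission
  imports Defs
begin

(*
  Two hypotheses that differ only in which of two arms is better at the first step: from the start
  state, the hidden arm j leads with probability 1/2 + e (the other arm with 1/2 - e) to an
  absorbing state paying 1 per step, and otherwise to one paying 1/2 per step. Every
  non-hidden first action costs at least e (H - 1), which is the minimum gap Delta_min, and a
  policy pays Delta_min times the probability of not choosing j, so every policy has
  suboptimality at least Delta_min in one of the two instances.

  The behaviour policy pulls each arm with probability 1/kappa_1, which gives the required
  coverage, so one episode reveals only O(e^2/kappa_1) about j: the Bhattacharyya coefficient of
  the two episode distributions is at least 1 - 8 e^2/kappa_1, and it tensorises over the K
  episodes. For e^2 = kappa_1/(16 K) the two data distributions keep affinity 1/2, and Le Cam's
  two-point inequality leaves expected suboptimality Delta_min/16 in one instance. As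
  Delta_min^2 = kappa_1 (H - 1)^2/(16 K), this is of order kappa_1 H^2/(K Delta_min).
*)

section \<open>Bhattacharyya coefficient\<close>

definition bhattacharyya :: "'a pmf \<Rightarrow> 'a pmf \<Rightarrow> ennreal" where
  "bhattacharyya p q = (\<integral>\<^sup>+x. ennreal (sqrt (pmf p x * pmf q x)) \<partial>count_space UNIV)"

lemma bhattacharyya_self [simp]: "bhattacharyya p p = 1"
  by (simp add: bhattacharyya_def nn_integral_pmf_eq_1)

lemma nn_integral_count_space_swap:
  "(\<integral>\<^sup>+x. \<integral>\<^sup>+y. f x y \<partial>count_space UNIV \<partial>count_space UNIV) =
   (\<integral>\<^sup>+y. \<integral>\<^sup>+x. f x y \<partial>count_space UNIV \<partial>count_space UNIV)"
  using nn_integral_fst_count_space[of "case_prod f"] nn_integral_snd_count_space[of "case_prod f"]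
  by simp

lemma ennreal_le_sqrt_if_square_le:
  fixes X :: ennreal
  assumes "X\<^sup>2 \<le> ennreal a" "0 \<le> a"
  shows "X \<le> ennreal (sqrt a)"
proof (cases X)
  case (real t)
  then have "t\<^sup>2 \<le> a"
    using assms by (simp add: ennreal_power ennreal_le_iff)
  then show ?thesis
    using real by (simp add: ennreal_leI real_le_rsqrt)
next
  case top
  then show ?thesis
    using assms(1) by (simp add: power2_eq_square top_unique)
qed

lemma ennreal_pmf_bind_count_space:
  "ennreal (pmf (bind_pmf p f) y) = (\<integral>\<^sup>+x. ennreal (pmf p x * pmf (f x) y) \<partial>count_space UNIV)"
  by (simp add: ennreal_pmf_bind nn_integral_measure_pmf ennreal_mult)

text \<open>Cauchy--Schwarz in the mixing variable, separately for every outcome of the composed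
  distributions.\<close>
lemma bhattacharyya_bind_pmf_ge:
  "(\<integral>\<^sup>+x. ennreal (sqrt (pmf p x * pmf q x)) * bhattacharyya (f x) (g x) \<partial>count_space UNIV)
     \<le> bhattacharyya (bind_pmf p f) (bind_pmf q g)"
proof -
  let ?u = "\<lambda>x y. ennreal (sqrt (pmf p x * pmf (f x) y))"
  let ?v = "\<lambda>x y. ennreal (sqrt (pmf q x * pmf (g x) y))"
  have "(\<integral>\<^sup>+x. ennreal (sqrt (pmf p x * pmf q x)) * bhattacharyya (f x) (g x) \<partial>count_space UNIV)
      = (\<integral>\<^sup>+x. \<integral>\<^sup>+y. ?u x y * ?v x y \<partial>count_space UNIV \<partial>count_space UNIV)"
    unfolding bhattacharyya_def
    by (intro nn_integral_cong)
       (auto simp flip: nn_integral_cmult ennreal_mult simp: real_sqrt_mult mult_ac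
             intro!: nn_integral_cong)
  also have "\<dots> = (\<integral>\<^sup>+y. \<integral>\<^sup>+x. ?u x y * ?v x y \<partial>count_space UNIV \<partial>count_space UNIV)"
    by (rule nn_integral_count_space_swap)
  also have "\<dots> \<le> bhattacharyya (bind_pmf p f) (bind_pmf q g)"
    unfolding bhattacharyya_def
  proof (intro nn_integral_mono ennreal_le_sqrt_if_square_le)
    fix y
    have "(\<integral>\<^sup>+x. ?u x y * ?v x y \<partial>count_space UNIV)\<^sup>2
       \<le> (\<integral>\<^sup>+x. ?u x y ^ 2 \<partial>count_space UNIV) * (\<integral>\<^sup>+x. ?v x y ^ 2 \<partial>count_space UNIV)"
      by (rule Cauchy_Schwarz_nn_integral) auto
    also have "\<dots> = ennreal (pmf (bind_pmf p f) y * pmf (bind_pmf q g) y)"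
      by (simp add: ennreal_pmf_bind_count_space ennreal_power ennreal_mult)
    finally show "(\<integral>\<^sup>+x. ?u x y * ?v x y \<partial>count_space UNIV)\<^sup>2
        \<le> ennreal (pmf (bind_pmf p f) y * pmf (bind_pmf q g) y)" .
  qed simp
  finally show ?thesis .
qed

lemma bhattacharyya_bind_pmf_same_ge:
  "(\<integral>\<^sup>+x. bhattacharyya (f x) (g x) \<partial>measure_pmf p) \<le> bhattacharyya (bind_pmf p f) (bind_pmf p g)"
  using bhattacharyya_bind_pmf_ge[of p p f g] by (simp add: nn_integral_measure_pmf)

lemma bhattacharyya_bind_pmf_kernel_ge:
  "bhattacharyya p q \<le> bhattacharyya (bind_pmf p f) (bind_pmf q f)"
  using bhattacharyya_bind_pmf_ge[of p q f f] by (simp add: bhattacharyya_def)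

lemma bhattacharyya_map_pmf_ge: "bhattacharyya p q \<le> bhattacharyya (map_pmf h p) (map_pmf h q)"
  unfolding map_pmf_def by (rule bhattacharyya_bind_pmf_kernel_ge)

lemma bhattacharyya_iid_pmf_ge: "bhattacharyya p q ^ K \<le> bhattacharyya (iid_pmf p K) (iid_pmf q K)"
proof (induction K)
  case (Suc K)
  have "bhattacharyya p q ^ Suc K
      = (\<integral>\<^sup>+x. ennreal (sqrt (pmf p x * pmf q x)) * bhattacharyya p q ^ K \<partial>count_space UNIV)"
    by (simp add: bhattacharyya_def nn_integral_multc mult_ac)
  also have "\<dots> \<le> (\<integral>\<^sup>+x. ennreal (sqrt (pmf p x * pmf q x)) *
      bhattacharyya (map_pmf (Cons x) (iid_pmf p K)) (map_pmf (Cons x) (iid_pmf q K))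
      \<partial>count_space UNIV)"
    by (intro nn_integral_mono mult_left_mono order.trans[OF Suc.IH bhattacharyya_map_pmf_ge])
       auto
  also have "\<dots> \<le> bhattacharyya (iid_pmf p (Suc K)) (iid_pmf q (Suc K))"
    by (simp add: bhattacharyya_bind_pmf_ge)
  finally show ?case .
qed simp

lemma bhattacharyya_bernoulli_pmf:
  assumes "0 \<le> p" "p \<le> 1" "0 \<le> q" "q \<le> 1"
  shows "bhattacharyya (bernoulli_pmf p) (bernoulli_pmf q) =
    ennreal (sqrt (p * q) + sqrt ((1 - p) * (1 - q)))"
  using assms by (simp add: bhattacharyya_def nn_integral_count_space_finite UNIV_bool ennreal_plus)

lemma bhattacharyya_square_le_overlap:
  "bhattacharyya p q ^ 2 \<le> 2 * (\<integral>\<^sup>+x. ennreal (min (pmf p x) (pmf q x)) \<partial>count_space UNIV)"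
proof -
  let ?mn = "\<lambda>x. min (pmf p x) (pmf q x)" and ?mx = "\<lambda>x. max (pmf p x) (pmf q x)"
  have "bhattacharyya p q
      = (\<integral>\<^sup>+x. ennreal (sqrt (?mn x)) * ennreal (sqrt (?mx x)) \<partial>count_space UNIV)"
    unfolding bhattacharyya_def
    by (intro nn_integral_cong)
       (auto simp: min_def max_def real_sqrt_mult mult.commute simp flip: ennreal_mult)
  then have "bhattacharyya p q ^ 2 \<le> (\<integral>\<^sup>+x. ennreal (sqrt (?mn x)) ^ 2 \<partial>count_space UNIV) *
                                   (\<integral>\<^sup>+x. ennreal (sqrt (?mx x)) ^ 2 \<partial>count_space UNIV)"
    by (simp add: Cauchy_Schwarz_nn_integral)
  also have "\<dots> = (\<integral>\<^sup>+x. ennreal (?mn x) \<partial>count_space UNIV) *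
                  (\<integral>\<^sup>+x. ennreal (?mx x) \<partial>count_space UNIV)"
    by (simp add: ennreal_power le_max_iff_disj)
  also have "\<dots> \<le> (\<integral>\<^sup>+x. ennreal (?mn x) \<partial>count_space UNIV) * 2"
  proof (intro mult_left_mono)
    have "(\<integral>\<^sup>+x. ennreal (?mx x) \<partial>count_space UNIV)
        \<le> (\<integral>\<^sup>+x. ennreal (pmf p x) + ennreal (pmf q x) \<partial>count_space UNIV)"
      by (intro nn_integral_mono) (auto simp: max_def simp flip: ennreal_plus)
    then show "(\<integral>\<^sup>+x. ennreal (?mx x) \<partial>count_space UNIV) \<le> 2"
      by (simp add: nn_integral_add nn_integral_pmf_eq_1)
  qed simp
  finally show ?thesis
    by (simp add: mult.commute)
qed

lemma overlap_le_risk_sum: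
  fixes L0 L1 :: "'a \<Rightarrow> real"
  assumes L0: "\<And>x. 0 \<le> L0 x" and L1: "\<And>x. 0 \<le> L1 x"
    and sep: "\<And>x. G \<le> L0 x + L1 x" and "0 \<le> G"
  shows "ennreal G * (\<integral>\<^sup>+x. ennreal (min (pmf p x) (pmf q x)) \<partial>count_space UNIV)
           \<le> (\<integral>\<^sup>+x. ennreal (L0 x) \<partial>measure_pmf p) + (\<integral>\<^sup>+x. ennreal (L1 x) \<partial>measure_pmf q)"
proof -
  let ?mn = "\<lambda>x. min (pmf p x) (pmf q x)"
  have "ennreal G * (\<integral>\<^sup>+x. ennreal (?mn x) \<partial>count_space UNIV)
      = (\<integral>\<^sup>+x. ennreal (?mn x * G) \<partial>count_space UNIV)"
    using \<open>0 \<le> G\<close> by (simp add: ennreal_mult mult.commute flip: nn_integral_cmult)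
  also have "\<dots> \<le> (\<integral>\<^sup>+x. ennreal (pmf p x * L0 x) + ennreal (pmf q x * L1 x) \<partial>count_space UNIV)"
  proof (intro nn_integral_mono)
    fix x
    have "?mn x * G \<le> ?mn x * (L0 x + L1 x)"
      using sep[of x] by (simp add: mult_left_mono)
    also have "\<dots> \<le> pmf p x * L0 x + pmf q x * L1 x"
      using L0[of x] L1[of x] by (simp add: distrib_left add_mono mult_right_mono)
    finally show "ennreal (?mn x * G) \<le> ennreal (pmf p x * L0 x) + ennreal (pmf q x * L1 x)"
      using L0[of x] L1[of x] by (simp flip: ennreal_plus add: ennreal_leI)
  qed
  also have "\<dots> = (\<integral>\<^sup>+x. ennreal (L0 x) \<partial>measure_pmf p) + (\<integral>\<^sup>+x. ennreal (L1 x) \<partial>measure_pmf q)"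
    using L0 L1 by (simp add: nn_integral_add nn_integral_measure_pmf ennreal_mult)
  finally show ?thesis .
qed

lemma le_cam_two_point:
  fixes L0 L1 :: "'a \<Rightarrow> real"
  assumes L0: "\<And>x. 0 \<le> L0 x" and L1: "\<And>x. 0 \<le> L1 x"
    and sep: "\<And>x. G \<le> L0 x + L1 x" and "0 \<le> G"
    and int0: "integrable (measure_pmf p) L0" and int1: "integrable (measure_pmf q) L1"
    and aff: "ennreal b \<le> bhattacharyya p q" and "0 \<le> b"
  shows "G * b\<^sup>2 \<le> 2 * (measure_pmf.expectation p L0 + measure_pmf.expectation q L1)"
proof -
  have E0: "(\<integral>\<^sup>+x. ennreal (L0 x) \<partial>measure_pmf p) = ennreal (measure_pmf.expectation p L0)"
    by (intro nn_integral_eq_integral int0) (simp add: L0)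
  have E1: "(\<integral>\<^sup>+x. ennreal (L1 x) \<partial>measure_pmf q) = ennreal (measure_pmf.expectation q L1)"
    by (intro nn_integral_eq_integral int1) (simp add: L1)
  have nonneg: "0 \<le> measure_pmf.expectation p L0" "0 \<le> measure_pmf.expectation q L1"
    using L0 L1 by (simp_all add: integral_nonneg_AE)
  have "ennreal (G * b\<^sup>2) = ennreal G * ennreal b ^ 2"
    using assms by (simp add: ennreal_mult ennreal_power)
  also have "\<dots> \<le> ennreal G * bhattacharyya p q ^ 2"
    by (intro mult_left_mono power_mono aff) simp_all
  also have "\<dots> \<le> ennreal G * (2 * (\<integral>\<^sup>+x. ennreal (min (pmf p x) (pmf q x)) \<partial>count_space UNIV))"
    by (intro mult_left_mono bhattacharyya_square_le_overlap) simp
  also have "\<dots> \<le> 2 * ((\<integral>\<^sup>+x. ennreal (L0 x) \<partial>measure_pmf p) +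
                         (\<integral>\<^sup>+x. ennreal (L1 x) \<partial>measure_pmf q))"
    using mult_left_mono[OF overlap_le_risk_sum[of L0 L1 G p q], of 2] assms
    by (simp add: mult.left_commute)
  also have "\<dots> = ennreal (2 * (measure_pmf.expectation p L0 + measure_pmf.expectation q L1))"
    using nonneg by (simp add: E0 E1 ennreal_mult ennreal_plus)
  finally show ?thesis
    using nonneg by (subst (asm) ennreal_le_iff) auto
qed

section \<open>Values of finite-horizon MDPs\<close>

lemma pmf_eq_1_imp_return_pmf:
  assumes "pmf p x = 1"
  shows "p = return_pmf x"
proof -
  have "AE y in p. y \<in> {x}"
    using measure_pmf.prob_eq_1[of "{x}" p] assms by (simp add: measure_pmf_single)
  then show ?thesis
    by (auto simp: AE_measure_pmf_iff simp flip: set_pmf_subset_singleton)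
qed

lemma expectation_if_eq:
  fixes p :: "'a pmf"
  shows "measure_pmf.expectation p (\<lambda>a. if a = x then c else d) = c * pmf p x + d * (1 - pmf p x)"
proof -
  have "(\<lambda>a. if a = x then c else d) = (\<lambda>a. (c - d) * indicator {x} a + d)"
    by (auto simp: indicator_def)
  moreover have "integrable (measure_pmf p) (indicat_real {x})"
    by (rule measure_pmf.integrable_const_bound[where B=1]) auto
  ultimately show ?thesis
    by (simp add: measure_pmf_single algebra_simps)
qed

lemma Vstar_eq_SUP_Qstar:
  assumes "h \<in> {1..H}"
  shows "Vstar H M h s = (SUP a. Qstar H M h s a)"
proof -
  have "H + 1 - h = Suc (H - h)" "H - (H - h) = h" "Vstar H M (Suc h) = Vstar_aux H M (H - h)"
    using assms by (auto simp: Vstar_def)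
  then show ?thesis
    by (simp add: Vstar_def Qstar_def)
qed

lemma Vpi_eq_expectation_Qpi:
  assumes "h \<in> {1..H}"
  shows "Vpi H M \<pi> h s = measure_pmf.expectation (\<pi> h s) (Qpi H M \<pi> h s)"
proof -
  have "H + 1 - h = Suc (H - h)" "H - (H - h) = h" "Vpi H M \<pi> (Suc h) = Vpi_aux H M \<pi> (H - h)"
    using assms by (auto simp: Vpi_def)
  then show ?thesis
    by (simp add: Vpi_def Qpi_def [abs_def])
qed

section \<open>The hard instances\<close>

definition outcome_pmf :: "real \<Rightarrow> nat pmf" where
  "outcome_pmf p = map_pmf (\<lambda>b. if b then 1 else 2) (bernoulli_pmf p)"

lemma pmf_outcome_pmf:
  assumes "0 \<le> p" "p \<le> 1"
  shows "pmf (outcome_pmf p) s = (if s = 1 then p else if s = 2 then 1 - p else 0)"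
proof -
  have "{b. b} = {True}" "{b. \<not> b} = {False}"
    by auto
  then show ?thesis
    using assms unfolding outcome_pmf_def by (auto simp: pmf_map vimage_def measure_pmf_single)
qed

lemma set_outcome_pmf: "set_pmf (outcome_pmf p) \<subseteq> {1, 2}"
  unfolding outcome_pmf_def by auto

lemma expectation_outcome_pmf:
  assumes "0 \<le> p" "p \<le> 1"
  shows "measure_pmf.expectation (outcome_pmf p) f = p * f 1 + (1 - p) * f 2"
  using assms unfolding outcome_pmf_def integral_map_pmf by (subst integral_bernoulli_pmf) auto

text \<open>State 0 is the start state, states 1 and 2 are absorbing, and action 0 earns 1,
  respectively 1/2, per step there. At step 1 the two arms a = 0, 1 earn 1 and lead to state 1
  with probability 1/2 + e for the hidden arm a = j and 1/2 - e for the other one; any other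
  action earns nothing and leads to state 1 with probability 1/2. All remaining state-action
  pairs lead to state 0 without reward.\<close>
definition arm_prob :: "real \<Rightarrow> nat \<Rightarrow> nat \<Rightarrow> real" where
  "arm_prob e j a = (if a \<le> 1 then if a = j then 1/2 + e else 1/2 - e else 1/2)"

definition absorbing_reward :: "nat \<Rightarrow> real" where
  "absorbing_reward s = (if s = 1 then 1 else 1/2)"

definition hard_reward :: "nat \<Rightarrow> nat \<Rightarrow> nat \<Rightarrow> real" where
  "hard_reward h s a =
     (if s = 1 \<or> s = 2 then if a = 0 then absorbing_reward s else 0
      else if h = 1 \<and> s = 0 \<and> a \<le> 1 then 1 else 0)"

definition hard_trans :: "real \<Rightarrow> nat \<Rightarrow> nat \<Rightarrow> nat \<Rightarrow> nat \<Rightarrow> nat pmf" where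
  "hard_trans e j h s a =
     (if h = 1 \<and> s = 0 then outcome_pmf (arm_prob e j a)
      else if s = 1 \<or> s = 2 then return_pmf s else return_pmf 0)"

definition hard_mdp :: "real \<Rightarrow> nat \<Rightarrow> mdp" where
  "hard_mdp e j =
     \<lparr>init = return_pmf 0, trans = hard_trans e j, rew = (\<lambda>h s a. return_pmf (hard_reward h s a))\<rparr>"

lemma hard_mdp_simps [simp]:
  "init (hard_mdp e j) = return_pmf 0"
  "trans (hard_mdp e j) = hard_trans e j"
  "rew (hard_mdp e j) h s a = return_pmf (hard_reward h s a)"
  "mean_rew (hard_mdp e j) h s a = hard_reward h s a"
  by (simp_all add: hard_mdp_def mean_rew_def)

lemma arm_prob_bounds:
  assumes "0 \<le> e" "e \<le> 1/2"
  shows "0 \<le> arm_prob e j a" "arm_prob e j a \<le> 1"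
  using assms by (simp_all add: arm_prob_def)

lemma Vpi_aux_hard_absorbing:
  assumes "s = 1 \<or> s = 2"
  shows "Vpi_aux H (hard_mdp e j) \<pi> k s = absorbing_reward s * (\<Sum>i<k. pmf (\<pi> (H - i) s) 0)"
proof (induction k)
  case (Suc k)
  have "Vpi_aux H (hard_mdp e j) \<pi> (Suc k) s = measure_pmf.expectation (\<pi> (H - k) s)
      (\<lambda>a. if a = 0 then absorbing_reward s + Vpi_aux H (hard_mdp e j) \<pi> k s
           else Vpi_aux H (hard_mdp e j) \<pi> k s)"
    using assms
    by (auto simp: hard_trans_def hard_reward_def intro!: Bochner_Integration.integral_cong)
  then show ?case
    using Suc by (simp add: expectation_if_eq algebra_simps)
qed simp

lemma Vstar_aux_hard_absorbing:
  assumes "s = 1 \<or> s = 2"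
  shows "Vstar_aux H (hard_mdp e j) k s = real k * absorbing_reward s"
proof (induction k)
  case (Suc k)
  have "Vstar_aux H (hard_mdp e j) (Suc k) s
      = (SUP a::nat. (if a = 0 then absorbing_reward s else 0) + real k * absorbing_reward s)"
    using assms Suc by (auto simp: hard_trans_def hard_reward_def)
  also have "\<dots> = absorbing_reward s + real k * absorbing_reward s"
    by (rule cSup_eq_maximum) (auto simp: absorbing_reward_def)
  finally show ?case
    by (simp add: algebra_simps)
qed simp

lemma Vstar_aux_hard_sink:
  assumes "k \<le> H - 1" "s \<noteq> 1" "s \<noteq> 2"
  shows "Vstar_aux H (hard_mdp e j) k s = 0"
  using assms
proof (induction k arbitrary: s)
  case (Suc k)
  then have "H - k \<noteq> 1"
    by auto
  then show ?case
    using Suc by (simp add: hard_trans_def hard_reward_def)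
qed simp

text \<open>The value of the absorbing state s at step 2 under \<pi>, in units of its reward per step.\<close>
definition stay_count :: "nat \<Rightarrow> policy \<Rightarrow> nat \<Rightarrow> real" where
  "stay_count H \<pi> s = (\<Sum>h=2..H. pmf (\<pi> h s) 0)"

lemma stay_count_bounds: "0 \<le> stay_count H \<pi> s" "stay_count H \<pi> s \<le> real (H - 1)"
proof -
  show "0 \<le> stay_count H \<pi> s"
    unfolding stay_count_def by (simp add: sum_nonneg)
  have "stay_count H \<pi> s \<le> real (card {2..H}) * 1"
    unfolding stay_count_def by (rule sum_bounded_above) (simp add: pmf_le_1)
  then show "stay_count H \<pi> s \<le> real (H - 1)"
    by simp
qed

lemma stay_count_maximal_imp_return_pmf:
  assumes "stay_count H \<pi> s = real (H - 1)" "h \<in> {2..H}"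
  shows "\<pi> h s = return_pmf 0"
proof -
  have "(\<Sum>h=2..H. 1 - pmf (\<pi> h s) 0) = 0"
    using assms(1) by (simp add: stay_count_def sum_subtractf)
  then have "\<forall>h\<in>{2..H}. 1 - pmf (\<pi> h s) 0 = 0"
    by (subst (asm) sum_nonneg_eq_0_iff) (auto simp: pmf_le_1)
  then show ?thesis
    using assms(2) by (simp add: pmf_eq_1_imp_return_pmf)
qed

lemma Vpi_hard_absorbing:
  assumes "s = 1 \<or> s = 2"
  shows "Vpi H (hard_mdp e j) \<pi> 2 s = absorbing_reward s * stay_count H \<pi> s"
proof -
  have "(\<Sum>i<H - 1. pmf (\<pi> (H - i) s) 0) = stay_count H \<pi> s"
    unfolding stay_count_def
    by (rule sum.reindex_bij_witness[where i="\<lambda>h. H - h" and j="\<lambda>i. H - i"]) auto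
  then show ?thesis
    using assms by (simp add: Vpi_def Vpi_aux_hard_absorbing)
qed

text \<open>The return of action a at the start if afterwards the reward is collected x times in
  state 1 and y times in state 2.\<close>
definition start_return :: "real \<Rightarrow> nat \<Rightarrow> real \<Rightarrow> real \<Rightarrow> nat \<Rightarrow> real" where
  "start_return e j x y a =
     (if a \<le> 1 then 1 else 0) + arm_prob e j a * x + (1 - arm_prob e j a) * (y / 2)"

lemma start_return_mono:
  assumes "0 \<le> e" "e \<le> 1/2" "x \<le> x'" "y \<le> y'"
  shows "start_return e j x y a \<le> start_return e j x' y' a"
  unfolding start_return_def
  using assms arm_prob_bounds[OF assms(1,2), of j a]
  by (intro add_mono mult_left_mono divide_right_mono order.refl) auto

lemma start_return_bounds:
  assumes "0 \<le> e" "e \<le> 1/2" "0 \<le> x" "x \<le> n" "0 \<le> y" "y \<le> n"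
  shows "0 \<le> start_return e j x y a" "start_return e j x y a \<le> 1 + n"
proof -
  have p: "0 \<le> arm_prob e j a" "arm_prob e j a \<le> 1"
    using arm_prob_bounds[OF assms(1,2)] by auto
  then show "0 \<le> start_return e j x y a"
    unfolding start_return_def using assms by simp
  have "start_return e j x y a \<le> 1 + arm_prob e j a * n + (1 - arm_prob e j a) * n"
    unfolding start_return_def using assms p
    by (intro add_mono mult_left_mono) auto
  then show "start_return e j x y a \<le> 1 + n"
    by (simp add: algebra_simps)
qed

definition hard_gap :: "nat \<Rightarrow> real \<Rightarrow> real" where
  "hard_gap H e = e * real (H - 1)"

lemma start_return_regret:
  assumes "j \<le> 1"
  shows "start_return e j n n j - start_return e j n n a =
    (if a = j then 0 else if a \<le> 1 then e * n else 1 + e * n / 2)"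
  using assms by (auto simp: start_return_def arm_prob_def field_simps)

lemma Qpi_hard_start:
  assumes "0 \<le> e" "e \<le> 1/2"
  shows "Qpi H (hard_mdp e j) \<pi> 1 0 a = start_return e j (stay_count H \<pi> 1) (stay_count H \<pi> 2) a"
  unfolding Qpi_def one_add_one using arm_prob_bounds[OF assms]
  by (simp add: hard_trans_def hard_reward_def expectation_outcome_pmf Vpi_hard_absorbing
      absorbing_reward_def start_return_def)

lemma Qstar_hard_start:
  assumes "0 \<le> e" "e \<le> 1/2"
  shows "Qstar H (hard_mdp e j) 1 0 a = start_return e j (real (H - 1)) (real (H - 1)) a"
  using arm_prob_bounds[OF assms]
  by (simp add: Qstar_def Vstar_def hard_trans_def hard_reward_def expectation_outcome_pmf
      Vstar_aux_hard_absorbing absorbing_reward_def start_return_def)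

lemma Qstar_hard_absorbing:
  assumes "s = 1 \<or> s = 2"
  shows "Qstar H (hard_mdp e j) h s a =
    (if a = 0 then absorbing_reward s else 0) + real (H - h) * absorbing_reward s"
  using assms
  by (auto simp: Qstar_def Vstar_def hard_trans_def hard_reward_def Vstar_aux_hard_absorbing)

lemma Qstar_hard_sink:
  assumes "s \<noteq> 1" "s \<noteq> 2" "\<not> (h = 1 \<and> s = 0)" "1 \<le> h"
  shows "Qstar H (hard_mdp e j) h s a = 0"
  using assms by (auto simp: Qstar_def Vstar_def hard_trans_def hard_reward_def Vstar_aux_hard_sink)

lemma Vstar_hard_start:
  assumes "0 \<le> e" "e \<le> 1/2" "j \<le> 1" "1 \<le> H"
  shows "Vstar H (hard_mdp e j) 1 0 = start_return e j (real (H - 1)) (real (H - 1)) j"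
proof -
  let ?r = "start_return e j (real (H - 1)) (real (H - 1))"
  have "Qstar H (hard_mdp e j) 1 0 = ?r"
    using Qstar_hard_start[OF assms(1,2)] by auto
  then have "Vstar H (hard_mdp e j) 1 0 = (SUP a. ?r a)"
    using assms by (simp add: Vstar_eq_SUP_Qstar)
  also have "\<dots> = ?r j"
  proof (rule cSup_eq_maximum)
    have "0 \<le> ?r j - ?r a" for a
      unfolding start_return_regret[OF assms(3)] using assms(1) by simp
    then have "?r a \<le> ?r j" for a
      by (simp only: diff_ge_0_iff_ge)
    then show "\<And>y. y \<in> range ?r \<Longrightarrow> y \<le> ?r j"
      by auto
  qed simp
  finally show ?thesis .
qed

text \<open>What \<pi> loses at steps 2..H compared with always playing action 0 in the absorbing
  states.\<close>
definition later_regret :: "nat \<Rightarrow> real \<Rightarrow> policy \<Rightarrow> real" where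
  "later_regret H e \<pi> =
     (1/2 + e) * (real (H - 1) - stay_count H \<pi> 1) +
     (1/2 - e) * ((real (H - 1) - stay_count H \<pi> 2) / 2)"

lemma later_regret_nonneg:
  assumes "0 \<le> e" "e \<le> 1/2"
  shows "0 \<le> later_regret H e \<pi>"
  unfolding later_regret_def using assms stay_count_bounds[of H \<pi>]
  by (intro add_nonneg_nonneg mult_nonneg_nonneg) auto

lemma SubOpt_hard_mdp:
  assumes "0 \<le> e" "e \<le> 1/2" "j \<le> 1" "1 \<le> H"
  shows "SubOpt H (hard_mdp e j) \<pi> = start_return e j (real (H - 1)) (real (H - 1)) j -
    measure_pmf.expectation (\<pi> 1 0) (start_return e j (stay_count H \<pi> 1) (stay_count H \<pi> 2))"
proof -
  have "Qpi H (hard_mdp e j) \<pi> 1 0 = start_return e j (stay_count H \<pi> 1) (stay_count H \<pi> 2)"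
    using Qpi_hard_start[OF assms(1,2)] by auto
  then show ?thesis
    using assms Vstar_hard_start[OF assms] Vpi_eq_expectation_Qpi[of 1 H "hard_mdp e j" \<pi> 0]
    by (simp add: SubOpt_def)
qed

definition optimal_hard_policy :: "nat \<Rightarrow> policy" where
  "optimal_hard_policy j h s = (if h = 1 \<and> s = 0 then return_pmf j else return_pmf 0)"

lemma SubOpt_optimal_hard_policy:
  assumes "0 \<le> e" "e \<le> 1/2" "j \<le> 1" "1 \<le> H"
  shows "SubOpt H (hard_mdp e j) (optimal_hard_policy j) = 0"
proof -
  have "stay_count H (optimal_hard_policy j) s = real (H - 1)" for s
    by (simp add: stay_count_def optimal_hard_policy_def)
  then show ?thesis
    using assms by (simp add: SubOpt_hard_mdp optimal_hard_policy_def)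
qed

lemma sum_pmf_square_le_1:
  assumes "finite A"
  shows "(\<Sum>x\<in>A. (pmf p x)\<^sup>2) \<le> 1"
proof -
  have "(\<Sum>x\<in>A. (pmf p x)\<^sup>2) \<le> (\<Sum>x\<in>A. pmf p x)"
    by (intro sum_mono) (simp add: power2_eq_square mult_left_le_one_le pmf_le_1)
  also have "\<dots> = measure_pmf.prob p A"
    using assms by (simp add: measure_measure_pmf_finite)
  finally show ?thesis
    by (metis measure_pmf.prob_le_1 order.trans)
qed

text \<open>The features are the transition probabilities into the states 0, 1, 2 and the reward, all
  halved to keep their norm at most 1.\<close>
lemma linear_mdp_hard_mdp: "linear_mdp H (hard_mdp e j)"
proof -
  have R: "0 \<le> hard_reward h s a" "hard_reward h s a \<le> 1" for h s a
    by (simp_all add: hard_reward_def absorbing_reward_def)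
  define \<phi> where
    "\<phi> h s a i = (if i < 3 then pmf (hard_trans e j h s a) i else hard_reward h s a) / 2" for h s a i
  define \<theta> where "\<theta> (h::nat) (i::nat) = (if i = 3 then 2 else (0::real))" for h i
  define \<nu> where
    "\<nu> (h::nat) (s'::nat) (i::nat) = (if i < 3 \<and> s' = i then 2 else (0::real))" for h s' i
  have sum4: "(\<Sum>i<4. f i) = f 0 + f 1 + f 2 + f 3" for f :: "nat \<Rightarrow> real"
    by (simp add: eval_nat_numeral)
  have "sqrt (\<Sum>i<4. (\<phi> h s a i)\<^sup>2) \<le> 1 \<and>
        mean_rew (hard_mdp e j) h s a = (\<Sum>i<4. \<phi> h s a i * \<theta> h i) \<and>
        (\<forall>s'. pmf (trans (hard_mdp e j) h s a) s' = (\<Sum>i<4. \<phi> h s a i * \<nu> h s' i))" for h s a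
  proof (intro conjI allI)
    let ?p = "pmf (hard_trans e j h s a)"
    have "hard_reward h s a ^ 2 \<le> 1"
      using R[of h s a] by (simp add: power_le_one)
    then have "(\<Sum>i<4. (\<phi> h s a i)\<^sup>2) \<le> 1"
      using sum_pmf_square_le_1[of "{0, 1, 2}" "hard_trans e j h s a"]
      unfolding sum4 \<phi>_def by (simp add: power_divide)
    then show "sqrt (\<Sum>i<4. (\<phi> h s a i)\<^sup>2) \<le> 1"
      by simp
    show "mean_rew (hard_mdp e j) h s a = (\<Sum>i<4. \<phi> h s a i * \<theta> h i)"
      unfolding sum4 \<phi>_def \<theta>_def by simp
    fix s'
    have "set_pmf (hard_trans e j h s a) \<subseteq> {0, 1, 2}"
      unfolding hard_trans_def using set_outcome_pmf by auto
    then have "s' \<ge> 3 \<Longrightarrow> ?p s' = 0"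
      by (auto simp: set_pmf_iff)
    moreover have "s' < 3 \<Longrightarrow> s' = 0 \<or> s' = 1 \<or> s' = 2"
      by auto
    ultimately show "pmf (trans (hard_mdp e j) h s a) s' = (\<Sum>i<4. \<phi> h s a i * \<nu> h s' i)"
      unfolding sum4 \<phi>_def \<nu>_def by (cases "s' < 3") auto
  qed
  then show ?thesis
    unfolding linear_mdp_def using R
    by (auto intro!: exI[of _ 4] exI[of _ \<phi>] exI[of _ \<theta>] exI[of _ \<nu>])
qed

text \<open>Arms 0 and 1 with probability 1/k each and action 2 otherwise, which covers the optimal
  first action with ratio k.\<close>
definition behaviour_start :: "real \<Rightarrow> nat pmf" where
  "behaviour_start k = bind_pmf (bernoulli_pmf (2 / k))
     (\<lambda>c. if c then map_pmf (\<lambda>b. if b then 0 else 1) (bernoulli_pmf (1/2)) else return_pmf 2)"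

definition behaviour :: "real \<Rightarrow> policy" where
  "behaviour k h s = (if h = 1 \<and> s = 0 then behaviour_start k else return_pmf 0)"

lemma pmf_behaviour_start:
  assumes "2 \<le> k"
  shows "pmf (behaviour_start k) a = (if a \<le> 1 then 1 / k else if a = 2 then 1 - 2 / k else 0)"
proof -
  let ?arm = "map_pmf (\<lambda>b. if b then 0 else 1) (bernoulli_pmf (1/2)) :: nat pmf"
  have "pmf ?arm a = (if a \<le> 1 then 1/2 else 0)"
  proof -
    have inj: "inj (\<lambda>b::bool. if b then 0::nat else 1)"
      by (auto simp: inj_def)
    have "pmf ?arm 0 = 1/2" "pmf ?arm 1 = 1/2"
      using pmf_map_inj'[OF inj, of "bernoulli_pmf (1/2)" True]
        pmf_map_inj'[OF inj, of "bernoulli_pmf (1/2)" False] by simp_all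
    moreover have "a > 1 \<Longrightarrow> pmf ?arm a = 0"
      by (auto simp: pmf_eq_0_set_pmf)
    ultimately show ?thesis
      by (cases "a = 0"; cases "a = 1") auto
  qed
  moreover have
    "pmf (behaviour_start k) a = 2 / k * pmf ?arm a + (1 - 2 / k) * pmf (return_pmf 2) a"
    unfolding behaviour_start_def pmf_bind using assms by simp
  ultimately show ?thesis
    by (auto simp: indicator_def)
qed

lemma set_behaviour_start: "set_pmf (behaviour_start k) \<subseteq> {0, 1, 2}"
  unfolding behaviour_start_def by (auto split: if_splits)

lemma sdist_hard_mdp_Suc:
  "sdist (hard_mdp e j) \<pi> (Suc m) = bind_pmf (\<pi> 1 0) (\<lambda>a. outcome_pmf (arm_prob e j a))"
proof (induction m)
  case 0
  have "hard_trans e j 1 0 = (\<lambda>a. outcome_pmf (arm_prob e j a))"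
    by (simp add: hard_trans_def fun_eq_iff)
  then show ?case
    by (simp add: bind_return_pmf)
next
  case (Suc m)
  have "bind_pmf (\<pi> (Suc (Suc m)) s) (hard_trans e j (Suc (Suc m)) s) = return_pmf s"
    if "s \<in> set_pmf (sdist (hard_mdp e j) \<pi> (Suc m))" for s
  proof -
    have "s = 1 \<or> s = 2"
      using that set_outcome_pmf unfolding Suc.IH by auto
    then have "hard_trans e j (Suc (Suc m)) s = (\<lambda>_. return_pmf s)"
      by (auto simp: hard_trans_def fun_eq_iff)
    then show ?thesis
      by (simp add: bind_pmf_const)
  qed
  then have
    "sdist (hard_mdp e j) \<pi> (Suc (Suc m)) = bind_pmf (sdist (hard_mdp e j) \<pi> (Suc m)) return_pmf"
    unfolding sdist.simps(2)[of _ _ "Suc m"] hard_mdp_simps by (intro bind_pmf_cong) auto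
  then show ?case
    using Suc.IH by (simp add: bind_return_pmf')
qed

lemma pmf_sdist_behaviour:
  assumes "2 \<le> k" "0 \<le> e" "e \<le> 1/2" "j \<le> 1" "s = 1 \<or> s = 2"
  shows "pmf (sdist (hard_mdp e j) (behaviour k) (Suc m)) s = 1/2"
proof -
  have "pmf (sdist (hard_mdp e j) (behaviour k) (Suc m)) s
      = measure_pmf.expectation (behaviour_start k) (\<lambda>a. pmf (outcome_pmf (arm_prob e j a)) s)"
    unfolding sdist_hard_mdp_Suc pmf_bind by (simp add: behaviour_def)
  also have "\<dots> = (\<Sum>a\<in>{0, 1, 2}. pmf (behaviour_start k) a *\<^sub>R pmf (outcome_pmf (arm_prob e j a)) s)"
    using set_behaviour_start by (intro integral_measure_pmf) auto
  also have "\<dots> = 1/2"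
    using assms arm_prob_bounds[OF assms(2,3), of j]
    by (auto simp: pmf_behaviour_start pmf_outcome_pmf arm_prob_def field_simps)
  finally show ?thesis .
qed

section \<open>Information about the hidden arm\<close>

lemma traj_hard_mdp_independent:
  "2 \<le> h \<Longrightarrow> traj (hard_mdp e j) mu h k s = traj (hard_mdp e 0) mu h k s"
proof (induction k arbitrary: h s)
  case (Suc k)
  have "hard_trans e j h s a = hard_trans e 0 h s a" for a
    using Suc.prems by (simp add: hard_trans_def)
  then show ?case
    using Suc by simp
qed simp

lemma episode_hard_mdp:
  "episode (Suc n) (hard_mdp e j) (behaviour k) =
     bind_pmf (behaviour_start k) (\<lambda>a. bind_pmf (outcome_pmf (arm_prob e j a))
       (\<lambda>s'. map_pmf (Cons (0, a, hard_reward 1 0 a)) (traj (hard_mdp e 0) (behaviour k) 2 n s')))"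
proof -
  have "hard_trans e j 1 0 = (\<lambda>a. outcome_pmf (arm_prob e j a))"
    by (simp add: hard_trans_def fun_eq_iff)
  moreover have
    "traj (hard_mdp e j) (behaviour k) 2 n s' = traj (hard_mdp e 0) (behaviour k) 2 n s'" for s'
    by (rule traj_hard_mdp_independent) simp
  ultimately show ?thesis
    by (simp add: episode_def bind_return_pmf behaviour_def numeral_2_eq_2)
qed

lemma bhattacharyya_outcome_arm_ge:
  assumes "0 \<le> e" "e \<le> 1/2"
  shows "ennreal (if a \<le> 1 then 1 - 4 * e\<^sup>2 else 1)
    \<le> bhattacharyya (outcome_pmf (arm_prob e 0 a)) (outcome_pmf (arm_prob e 1 a))"
proof (cases "a \<le> 1")
  case True
  define x where "x = 1 - 4 * e\<^sup>2"
  have "e\<^sup>2 \<le> (1/2)\<^sup>2"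
    using assms by (intro power_mono) auto
  then have "0 \<le> x" "x \<le> 1"
    by (simp_all add: x_def power2_eq_square)
  moreover have "(1/2 + e) * (1/2 - e) = x / 4"
    by (simp add: x_def power2_eq_square algebra_simps)
  ultimately have "(x / 2)\<^sup>2 \<le> (1/2 + e) * (1/2 - e)"
    by (simp add: power2_eq_square mult_left_le_one_le)
  then have "x \<le> 2 * sqrt ((1/2 + e) * (1/2 - e))"
    using real_le_rsqrt by fastforce
  also have "\<dots> = sqrt (arm_prob e 0 a * arm_prob e 1 a) +
      sqrt ((1 - arm_prob e 0 a) * (1 - arm_prob e 1 a))"
    using True by (cases a) (auto simp: arm_prob_def algebra_simps)
  finally have "ennreal x \<le> ennreal (sqrt (arm_prob e 0 a * arm_prob e 1 a) +
      sqrt ((1 - arm_prob e 0 a) * (1 - arm_prob e 1 a)))"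
    by (rule ennreal_leI)
  also have "\<dots> = bhattacharyya (bernoulli_pmf (arm_prob e 0 a)) (bernoulli_pmf (arm_prob e 1 a))"
    using arm_prob_bounds[OF assms] by (intro bhattacharyya_bernoulli_pmf[symmetric])
  also have "\<dots> \<le> bhattacharyya (outcome_pmf (arm_prob e 0 a)) (outcome_pmf (arm_prob e 1 a))"
    unfolding outcome_pmf_def by (rule bhattacharyya_map_pmf_ge)
  finally show ?thesis
    using True by (simp add: x_def)
next
  case False
  then show ?thesis
    by (simp add: arm_prob_def)
qed

text \<open>Only the arm pulled at the start, which the behaviour policy does with probability 2/k,
  carries information about j.\<close>
lemma bhattacharyya_episode_ge:
  assumes "1 \<le> H" "0 \<le> e" "e \<le> 1/2" "2 \<le> k"
  shows "ennreal (1 - 8 * e\<^sup>2 / k) \<le>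
    bhattacharyya (episode H (hard_mdp e 0) (behaviour k)) (episode H (hard_mdp e 1) (behaviour k))"
proof -
  obtain n where n: "H = Suc n"
    using assms(1) by (cases H) auto
  define tail where
    "tail a s' = map_pmf (Cons (0, a, hard_reward 1 0 a)) (traj (hard_mdp e 0) (behaviour k) 2 n s')"
    for a s'
  define b where "b a = (if a \<le> (1::nat) then 1 - 4 * e\<^sup>2 else 1)" for a
  have "e\<^sup>2 \<le> (1/2)\<^sup>2"
    using assms by (intro power_mono) auto
  then have b_nonneg: "0 \<le> b a" for a
    by (simp add: b_def power2_eq_square)
  have "1 - 8 * e\<^sup>2 / k = (\<Sum>a\<in>{0, 1, 2}. b a * pmf (behaviour_start k) a)"
    using assms(4) by (simp add: b_def pmf_behaviour_start field_simps)
  then have "ennreal (1 - 8 * e\<^sup>2 / k) = (\<Sum>a\<in>{0, 1, 2}. ennreal (b a * pmf (behaviour_start k) a))"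
    using b_nonneg by (simp add: sum_ennreal)
  also have "\<dots> = (\<Sum>a\<in>{0, 1, 2}. ennreal (b a) * pmf (behaviour_start k) a)"
    using b_nonneg by (simp add: ennreal_mult)
  also have "\<dots> = (\<integral>\<^sup>+a. ennreal (b a) \<partial>measure_pmf (behaviour_start k))"
    using set_behaviour_start by (intro nn_integral_measure_pmf_support[symmetric]) auto
  also have "\<dots> \<le> (\<integral>\<^sup>+a. bhattacharyya (bind_pmf (outcome_pmf (arm_prob e 0 a)) (tail a))
      (bind_pmf (outcome_pmf (arm_prob e 1 a)) (tail a)) \<partial>measure_pmf (behaviour_start k))"
    unfolding b_def
    by (intro nn_integral_mono order.trans[OF bhattacharyya_outcome_arm_ge[OF assms(2,3)]
          bhattacharyya_bind_pmf_kernel_ge])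
  also have "\<dots> \<le>
      bhattacharyya (episode H (hard_mdp e 0) (behaviour k)) (episode H (hard_mdp e 1) (behaviour k))"
    unfolding n episode_hard_mdp tail_def[symmetric] by (rule bhattacharyya_bind_pmf_same_ge)
  finally show ?thesis .
qed

locale hard_instance =
  fixes H :: nat and e :: real
  assumes two_le_H: "2 \<le> H" and e_pos: "0 < e" and hard_gap_le: "hard_gap H e \<le> 1/4"
begin

lemma e_le_quarter: "e \<le> 1/4"
proof -
  have "e * 1 \<le> e * real (H - 1)"
    using two_le_H e_pos by (intro mult_left_mono) auto
  then show ?thesis
    using hard_gap_le by (simp add: hard_gap_def)
qed

lemma e_bounds: "0 \<le> e" "e \<le> 1/2"
  using e_pos e_le_quarter by auto

lemma one_le_H: "1 \<le> H"
  using two_le_H by simp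

lemma hard_gap_pos: "0 < hard_gap H e"
  using two_le_H e_pos by (simp add: hard_gap_def)

lemma gap_hard_mdp:
  assumes "j \<le> 1" "h \<in> {1..H}"
  shows "gap H (hard_mdp e j) h s a =
    (if h = 1 \<and> s = 0 then if a = j then 0 else if a \<le> 1 then hard_gap H e else 1 + hard_gap H e / 2
     else if s = 1 \<or> s = 2 then if a = 0 then 0 else absorbing_reward s
     else 0)"
proof -
  consider "h = 1" "s = 0" | "s = 1 \<or> s = 2" | "\<not> (h = 1 \<and> s = 0)" "s \<noteq> 1" "s \<noteq> 2"
    by blast
  then show ?thesis
  proof cases
    case 1
    then show ?thesis
      using Vstar_hard_start[OF e_bounds assms(1) one_le_H] Qstar_hard_start[OF e_bounds, of H j a]
        start_return_regret[OF assms(1), of e "real (H - 1)" a]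
      by (simp add: gap_def hard_gap_def)
  next
    case 2
    let ?r = "absorbing_reward s"
    have "Qstar H (hard_mdp e j) h s = (\<lambda>a. (if a = 0 then ?r else 0) + real (H - h) * ?r)"
      using Qstar_hard_absorbing[OF 2] by auto
    moreover have "(SUP a. (if a = 0 then ?r else 0) + real (H - h) * ?r) = ?r + real (H - h) * ?r"
      by (rule cSup_eq_maximum) (auto simp: absorbing_reward_def)
    ultimately show ?thesis
      using 2 assms(2) by (auto simp: gap_def Vstar_eq_SUP_Qstar)
  next
    case 3
    then have "Qstar H (hard_mdp e j) h s = (\<lambda>a. 0)"
      using assms(2) by (auto simp: Qstar_hard_sink)
    then show ?thesis
      using 3 assms(2) by (auto simp: gap_def Vstar_eq_SUP_Qstar)
  qed
qed

lemma min_gap_hard_mdp: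
  assumes "j \<le> 1"
  shows "gap_set H (hard_mdp e j) \<noteq> {}" "min_gap H (hard_mdp e j) = hard_gap H e"
proof -
  have "1 - j \<noteq> j" "1 - j \<le> 1"
    using assms by arith+
  then have "gap H (hard_mdp e j) 1 0 (1 - j) = hard_gap H e"
    using assms one_le_H by (subst gap_hard_mdp) auto
  then have "\<exists>h s a. hard_gap H e = gap H (hard_mdp e j) h s a \<and> h \<in> {1..H} \<and>
      gap H (hard_mdp e j) h s a \<noteq> 0"
    using one_le_H hard_gap_pos by (intro exI[of _ 1] exI[of _ 0] exI[of _ "1 - j"]) auto
  then have G: "hard_gap H e \<in> gap_set H (hard_mdp e j)"
    unfolding gap_set_def by simp
  then show "gap_set H (hard_mdp e j) \<noteq> {}"
    by auto
  have "hard_gap H e \<le> g" if g: "g \<in> gap_set H (hard_mdp e j)" for g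
  proof -
    obtain h s a where "g = gap H (hard_mdp e j) h s a" "h \<in> {1..H}" "g \<noteq> 0"
      using g unfolding gap_set_def by blast
    then show ?thesis
      using hard_gap_le hard_gap_pos
      by (auto simp: gap_hard_mdp[OF assms] absorbing_reward_def split: if_splits)
  qed
  then show "min_gap H (hard_mdp e j) = hard_gap H e"
    unfolding min_gap_def using G by (intro cInf_eq_minimum)
qed

lemma integrable_start_return:
  "integrable (measure_pmf p) (start_return e j (stay_count H \<pi> 1) (stay_count H \<pi> 2))"
  using start_return_bounds[OF e_bounds stay_count_bounds stay_count_bounds]
  by (intro measure_pmf.integrable_const_bound[where B="1 + real (H - 1)"]) auto

lemma SubOpt_hard_ge:
  assumes "j \<le> 1"
  shows "hard_gap H e * (1 - pmf (\<pi> 1 0) j) + later_regret H e \<pi> * pmf (\<pi> 1 0) j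
    \<le> SubOpt H (hard_mdp e j) \<pi>"
proof -
  let ?n = "real (H - 1)" and ?p = "pmf (\<pi> 1 0) j"
  let ?r = "start_return e j ?n ?n"
  let ?q = "start_return e j (stay_count H \<pi> 1) (stay_count H \<pi> 2)"
  let ?bound = "\<lambda>a. if a = j then ?r j - later_regret H e \<pi> else ?r j - hard_gap H e"
  have "?q a \<le> ?bound a" for a
  proof (cases "a = j")
    case True
    then show ?thesis
      using assms by (simp add: start_return_def later_regret_def arm_prob_def field_simps)
  next
    case False
    have "?q a \<le> ?r a"
      using e_bounds stay_count_bounds by (intro start_return_mono) auto
    moreover have "?r j - ?r a = (if a \<le> 1 then hard_gap H e else 1 + hard_gap H e / 2)"
      using start_return_regret[OF assms, of e "real (H - 1)" a] False by (simp add: hard_gap_def)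
    then have "hard_gap H e \<le> ?r j - ?r a"
      using hard_gap_pos hard_gap_le by simp
    ultimately show ?thesis
      using False by simp
  qed
  then have "measure_pmf.expectation (\<pi> 1 0) ?q \<le> measure_pmf.expectation (\<pi> 1 0) ?bound"
    by (intro integral_mono integrable_start_return measure_pmf.integrable_const_bound[where
        B="\<bar>?r j - later_regret H e \<pi>\<bar> + \<bar>?r j - hard_gap H e\<bar>"]) auto
  also have "\<dots> = (?r j - later_regret H e \<pi>) * ?p + (?r j - hard_gap H e) * (1 - ?p)"
    by (rule expectation_if_eq)
  finally show ?thesis
    using SubOpt_hard_mdp[OF e_bounds assms one_le_H, of \<pi>] two_le_H by (simp add: algebra_simps)
qed

lemma SubOpt_hard_bounds:
  assumes "j \<le> 1"
  shows "0 \<le> SubOpt H (hard_mdp e j) \<pi>" "SubOpt H (hard_mdp e j) \<pi> \<le> real H"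
proof -
  have "0 \<le> hard_gap H e * (1 - pmf (\<pi> 1 0) j) + later_regret H e \<pi> * pmf (\<pi> 1 0) j"
    using hard_gap_pos later_regret_nonneg[OF e_bounds] by (simp add: pmf_le_1)
  then show "0 \<le> SubOpt H (hard_mdp e j) \<pi>"
    using SubOpt_hard_ge[OF assms, where \<pi>=\<pi>] by linarith
  have "0 \<le>
      measure_pmf.expectation (\<pi> 1 0) (start_return e j (stay_count H \<pi> 1) (stay_count H \<pi> 2))"
    using start_return_bounds[OF e_bounds stay_count_bounds stay_count_bounds]
    by (intro integral_nonneg_AE) auto
  moreover have "start_return e j (real (H - 1)) (real (H - 1)) j \<le> 1 + real (H - 1)"
    using start_return_bounds[OF e_bounds] by simp
  ultimately show "SubOpt H (hard_mdp e j) \<pi> \<le> real H"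
    using SubOpt_hard_mdp[OF e_bounds assms one_le_H, of \<pi>] two_le_H by simp
qed

lemma hard_gap_le_SubOpt_sum:
  "hard_gap H e \<le> SubOpt H (hard_mdp e 0) \<pi> + SubOpt H (hard_mdp e 1) \<pi>"
proof -
  have "pmf (\<pi> 1 0) 0 + pmf (\<pi> 1 0) 1 = measure_pmf.prob (\<pi> 1 0) {0, 1}"
    by (simp add: measure_measure_pmf_finite)
  then have "pmf (\<pi> 1 0) 0 + pmf (\<pi> 1 0) 1 \<le> 1"
    by (metis measure_pmf.prob_le_1)
  then have "hard_gap H e * (pmf (\<pi> 1 0) 0 + pmf (\<pi> 1 0) 1) \<le> hard_gap H e"
    using hard_gap_pos by (simp add: mult_left_le)
  then have total:
    "hard_gap H e \<le> hard_gap H e * (1 - pmf (\<pi> 1 0) 0) + hard_gap H e * (1 - pmf (\<pi> 1 0) 1)"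
    by (simp add: algebra_simps)
  have each: "hard_gap H e * (1 - pmf (\<pi> 1 0) j) \<le> SubOpt H (hard_mdp e j) \<pi>" if "j \<le> 1" for j
  proof -
    have "0 \<le> later_regret H e \<pi> * pmf (\<pi> 1 0) j"
      using later_regret_nonneg[OF e_bounds] by simp
    then show ?thesis
      using SubOpt_hard_ge[OF that, of \<pi>] by linarith
  qed
  show ?thesis
    using total each[of 0] each[of 1] by simp
qed

lemma optimal_policy_hard_mdp:
  assumes "j \<le> 1" and opt: "SubOpt H (hard_mdp e j) \<pi> = 0"
  shows "\<pi> 1 0 = return_pmf j" and "h \<in> {2..H} \<Longrightarrow> s = 1 \<or> s = 2 \<Longrightarrow> \<pi> h s = return_pmf 0"
proof -
  let ?p = "pmf (\<pi> 1 0) j"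
  have "0 \<le> hard_gap H e * (1 - ?p)" "0 \<le> later_regret H e \<pi> * ?p"
    using hard_gap_pos later_regret_nonneg[OF e_bounds] by (simp_all add: pmf_le_1)
  then have "hard_gap H e * (1 - ?p) = 0" "later_regret H e \<pi> * ?p = 0"
    using SubOpt_hard_ge[OF assms(1), of \<pi>] opt by linarith+
  then have p: "?p = 1" and regret: "later_regret H e \<pi> = 0"
    using hard_gap_pos by auto
  then show "\<pi> 1 0 = return_pmf j"
    by (simp add: pmf_eq_1_imp_return_pmf)
  have "0 \<le> (1/2 + e) * (real (H - 1) - stay_count H \<pi> 1)"
    "0 \<le> (1/2 - e) * ((real (H - 1) - stay_count H \<pi> 2) / 2)"
    using e_bounds stay_count_bounds[of H \<pi>] by simp_all
  then have "(1/2 + e) * (real (H - 1) - stay_count H \<pi> 1) = 0"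
    "(1/2 - e) * ((real (H - 1) - stay_count H \<pi> 2) / 2) = 0"
    using regret unfolding later_regret_def by linarith+
  then have "stay_count H \<pi> 1 = real (H - 1)" "stay_count H \<pi> 2 = real (H - 1)"
    using e_pos e_le_quarter by auto
  then show "h \<in> {2..H} \<Longrightarrow> s = 1 \<or> s = 2 \<Longrightarrow> \<pi> h s = return_pmf 0"
    using stay_count_maximal_imp_return_pmf by blast
qed

lemma visit_optimal_start_le:
  assumes "j \<le> 1" "SubOpt H (hard_mdp e j) \<pi> = 0" "2 \<le> k"
  shows "visit (hard_mdp e j) \<pi> 1 s a \<le> k * visit (hard_mdp e j) (behaviour k) 1 s a"
proof -
  have "0 \<le> k * visit (hard_mdp e j) (behaviour k) 1 s a"
    using assms(3) by (simp add: visit_def)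
  moreover have "pmf (behaviour_start k) j = 1 / k"
    using assms pmf_behaviour_start by simp
  ultimately show ?thesis
    using optimal_policy_hard_mdp(1)[OF assms(1,2)] assms(3)
    by (cases "s = 0 \<and> a = j") (auto simp: visit_def behaviour_def)
qed

lemma visit_optimal_later_le:
  assumes "j \<le> 1" "SubOpt H (hard_mdp e j) \<pi> = 0" "2 \<le> k" "h \<in> {2..H}"
  shows "visit (hard_mdp e j) \<pi> h s a \<le> 2 * visit (hard_mdp e j) (behaviour k) h s a"
proof -
  obtain m where m: "h - 1 = Suc m"
    using assms(4) by (cases "h - 1") auto
  have "sdist (hard_mdp e j) \<pi> (h - 1) = outcome_pmf (arm_prob e j j)"
    unfolding m sdist_hard_mdp_Suc optimal_policy_hard_mdp(1)[OF assms(1,2)]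
    by (simp add: bind_return_pmf)
  then have visit:
    "visit (hard_mdp e j) \<pi> h s a = pmf (outcome_pmf (arm_prob e j j)) s * pmf (\<pi> h s) a"
    by (simp add: visit_def)
  show ?thesis
  proof (cases "s = 1 \<or> s = 2")
    case True
    have "visit (hard_mdp e j) (behaviour k) h s a = 1/2 * pmf (return_pmf 0) a"
      unfolding visit_def m pmf_sdist_behaviour[OF assms(3) e_bounds assms(1) True]
      using assms(4) by (simp add: behaviour_def)
    moreover have "visit (hard_mdp e j) \<pi> h s a \<le> pmf (return_pmf 0) a"
      unfolding visit optimal_policy_hard_mdp(2)[OF assms(1,2,4) True]
      by (simp add: mult_left_le_one_le pmf_le_1)
    ultimately show ?thesis
      by simp
  next
    case False
    then have "visit (hard_mdp e j) \<pi> h s a = 0"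
      unfolding visit using arm_prob_bounds[OF e_bounds] by (simp add: pmf_outcome_pmf)
    moreover have "0 \<le> visit (hard_mdp e j) (behaviour k) h s a"
      by (simp add: visit_def)
    ultimately show ?thesis
      by simp
  qed
qed

lemma visit_optimal_le:
  assumes "j \<le> 1" "SubOpt H (hard_mdp e j) \<pi> = 0" "\<forall>h\<ge>1. 2 \<le> \<kappa> h" "h \<in> {1..H}"
  shows "visit (hard_mdp e j) \<pi> h s a \<le> \<kappa> h * visit (hard_mdp e j) (behaviour (\<kappa> 1)) h s a"
proof (cases "h = 1")
  case True
  then show ?thesis
    using visit_optimal_start_le[OF assms(1,2)] assms(3) by simp
next
  case False
  then have "h \<in> {2..H}"
    using assms(4) by auto
  then have "visit (hard_mdp e j) \<pi> h s a \<le> 2 * visit (hard_mdp e j) (behaviour (\<kappa> 1)) h s a"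
    using assms(3) by (intro visit_optimal_later_le[OF assms(1,2)]) auto
  also have "\<dots> \<le> \<kappa> h * visit (hard_mdp e j) (behaviour (\<kappa> 1)) h s a"
    using assms(3,4) by (intro mult_right_mono) (auto simp: visit_def)
  finally show ?thesis .
qed

text \<open>Each episode costs at most 8 e^2 / k \<le> 1 / (2 K) of affinity, so by Bernoulli's inequality
  the K episodes keep affinity 1/2.\<close>
lemma bhattacharyya_data_dist_hard_ge:
  assumes "2 \<le> k" "16 * real K * e\<^sup>2 \<le> k"
  shows "ennreal (1/2) \<le>
    bhattacharyya (data_dist H K (hard_mdp e 0) (behaviour k)) (data_dist H K (hard_mdp e 1) (behaviour k))"
proof -
  let ?x = "8 * e\<^sup>2 / k"
  have "e\<^sup>2 \<le> (1/4)\<^sup>2"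
    using e_bounds e_le_quarter by (intro power_mono) auto
  then have x: "?x \<le> 1" "real K * ?x \<le> 1/2"
    using assms by (auto simp: field_simps power2_eq_square)
  have "1/2 \<le> 1 + real K * (- ?x)"
    using x by simp
  also have "\<dots> \<le> (1 + (- ?x)) ^ K"
    using x by (intro Bernoulli_inequality) simp
  finally have "ennreal (1/2) \<le> ennreal ((1 - ?x) ^ K)"
    by (intro ennreal_leI) simp
  also have "\<dots> = ennreal (1 - ?x) ^ K"
    using x by (simp add: ennreal_power)
  also have "\<dots> \<le>
      bhattacharyya (episode H (hard_mdp e 0) (behaviour k)) (episode H (hard_mdp e 1) (behaviour k)) ^ K"
    using one_le_H e_bounds assms(1) by (intro power_mono bhattacharyya_episode_ge) auto
  also have "\<dots> \<le>
      bhattacharyya (data_dist H K (hard_mdp e 0) (behaviour k)) (data_dist H K (hard_mdp e 1) (behaviour k))"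
    unfolding data_dist_def by (rule bhattacharyya_iid_pmf_ge)
  finally show ?thesis .
qed

lemma expected_SubOpt_hard_mdp_ge:
  assumes "2 \<le> k" "16 * real K * e\<^sup>2 \<le> k"
  shows "\<exists>j\<le>1. hard_gap H e / 16 \<le>
    measure_pmf.expectation (data_dist H K (hard_mdp e j) (behaviour k)) (\<lambda>D. SubOpt H (hard_mdp e j) (Algo D))"
proof -
  let ?P = "\<lambda>j. data_dist H K (hard_mdp e j) (behaviour k)"
  let ?L = "\<lambda>j D. SubOpt H (hard_mdp e j) (Algo D)"
  have "integrable (measure_pmf (?P j)) (?L j)" if "j \<le> 1" for j
    using SubOpt_hard_bounds[OF that]
    by (intro measure_pmf.integrable_const_bound[where B="real H"]) auto
  then have "hard_gap H e * (1/2)\<^sup>2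
      \<le> 2 * (measure_pmf.expectation (?P 0) (?L 0) + measure_pmf.expectation (?P 1) (?L 1))"
    using SubOpt_hard_bounds(1) hard_gap_le_SubOpt_sum hard_gap_pos bhattacharyya_data_dist_hard_ge[OF assms]
    by (intro le_cam_two_point) auto
  then have "hard_gap H e / 16 \<le> measure_pmf.expectation (?P 0) (?L 0) \<or>
      hard_gap H e / 16 \<le> measure_pmf.expectation (?P 1) (?L 1)"
    by (simp add: power2_eq_square) linarith
  moreover have "(0::nat) \<le> 1" "(1::nat) \<le> 1"
    by simp_all
  ultimately show ?thesis
    by blast
qed
end

lemma hard_instance_parameters:
  assumes "2 \<le> H" "2 \<le> k" "k * real H ^ 2 \<le> real K"
  defines "e \<equiv> sqrt (k / (16 * real K))"
  shows "hard_instance H e" "16 * real K * e\<^sup>2 \<le> k"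
    "1/1024 * k * real H ^ 2 / (real K * hard_gap H e) \<le> hard_gap H e / 16"
proof -
  have "0 < k * real H ^ 2"
    using assms by simp
  then have K: "0 < real K"
    using assms(3) by linarith
  then have e: "0 < e" "e\<^sup>2 = k / (16 * real K)"
    using assms(2) by (simp_all add: e_def)
  then show "16 * real K * e\<^sup>2 \<le> k"
    using K by simp
  let ?n = "real (H - 1)"
  have n: "1 \<le> ?n" "real H \<le> 2 * ?n"
    using assms(1) by auto
  have G: "0 < hard_gap H e" "(hard_gap H e)\<^sup>2 = k * ?n\<^sup>2 / (16 * real K)"
    using e n by (simp_all add: hard_gap_def power_mult_distrib)
  have "k * ?n\<^sup>2 \<le> k * real H ^ 2"
    using assms(1,2) by (intro mult_left_mono power_mono) auto
  then have "(hard_gap H e)\<^sup>2 \<le> (1/4)\<^sup>2"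
    using assms(3) K unfolding G(2) by (simp add: field_simps power2_eq_square)
  then have "hard_gap H e \<le> 1/4"
    by (rule power2_le_imp_le) simp
  then show "hard_instance H e"
    using assms(1) e by unfold_locales
  have "k * real H ^ 2 \<le> k * (2 * ?n)\<^sup>2"
    using assms(2) n by (intro mult_left_mono power_mono) auto
  also have "\<dots> = 64 * real K * (hard_gap H e)\<^sup>2"
    using K unfolding G(2) by (simp add: power_mult_distrib)
  finally show "1/1024 * k * real H ^ 2 / (real K * hard_gap H e) \<le> hard_gap H e / 16"
    using K G(1) by (simp add: field_simps power2_eq_square)
qed

lemma hard_instance_lower_bound:
  fixes \<kappa> :: "nat \<Rightarrow> real"
  assumes H: "2 \<le> H" and \<kappa>: "\<forall>h\<ge>1. 2 \<le> \<kappa> h" and K: "nat \<lceil>\<kappa> 1 * real H ^ 2\<rceil> \<le> K"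
  shows "\<exists>(M::mdp) (mu::policy).
           linear_mdp H M \<and>
           gap_set H M \<noteq> {} \<and> min_gap H M > 0 \<and>
           (\<exists>\<pi>. optimal_policy H M \<pi>) \<and>
           (\<forall>\<pi>. optimal_policy H M \<pi> \<longrightarrow>
              (\<forall>h\<in>{1..H}. \<forall>s a. visit M \<pi> h s a \<le> \<kappa> h * visit M mu h s a)) \<and>
           measure_pmf.expectation (data_dist H K M mu) (\<lambda>D. SubOpt H M (Algo D))
             \<ge> 1/1024 * Min (\<kappa> ` {1..H}) * real H ^ 2 / (real K * min_gap H M)"
proof -
  define e where "e = sqrt (\<kappa> 1 / (16 * real K))"
  have \<kappa>1: "2 \<le> \<kappa> 1"
    using \<kappa> by simp
  have "\<kappa> 1 * real H ^ 2 \<le> real K"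
    using K by linarith
  note parameters = hard_instance_parameters[OF H \<kappa>1 this, folded e_def]
  interpret hard_instance H e
    by (fact parameters(1))
  obtain j where j: "j \<le> 1" and risk: "hard_gap H e / 16 \<le>
      measure_pmf.expectation (data_dist H K (hard_mdp e j) (behaviour (\<kappa> 1)))
        (\<lambda>D. SubOpt H (hard_mdp e j) (Algo D))"
    using expected_SubOpt_hard_mdp_ge[OF \<kappa>1 parameters(2)] by blast
  have "Min (\<kappa> ` {1..H}) \<le> \<kappa> 1"
    using H by (intro Min_le) auto
  then have "1/1024 * Min (\<kappa> ` {1..H}) * real H ^ 2 / (real K * hard_gap H e)
      \<le> 1/1024 * \<kappa> 1 * real H ^ 2 / (real K * hard_gap H e)"
    using hard_gap_pos by (intro divide_right_mono mult_right_mono) auto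
  also have "\<dots> \<le> hard_gap H e / 16"
    by (fact parameters(3))
  finally have rate: "1/1024 * Min (\<kappa> ` {1..H}) * real H ^ 2 / (real K * min_gap H (hard_mdp e j))
      \<le> hard_gap H e / 16"
    by (simp add: min_gap_hard_mdp(2)[OF j])
  have coverage: "\<forall>\<pi>. optimal_policy H (hard_mdp e j) \<pi> \<longrightarrow> (\<forall>h\<in>{1..H}. \<forall>s a.
      visit (hard_mdp e j) \<pi> h s a \<le> \<kappa> h * visit (hard_mdp e j) (behaviour (\<kappa> 1)) h s a)"
    using visit_optimal_le[OF j _ \<kappa>] by (simp add: optimal_policy_def)
  have "optimal_policy H (hard_mdp e j) (optimal_hard_policy j)"
    using SubOpt_optimal_hard_policy[OF e_bounds j one_le_H] by (simp add: optimal_policy_def)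
  then show ?thesis
    using min_gap_hard_mdp[OF j] hard_gap_pos linear_mdp_hard_mdp coverage order.trans[OF rate risk]
    by (intro exI[of _ "hard_mdp e j"] exI[of _ "behaviour (\<kappa> 1)"] conjI
        exI[of _ "optimal_hard_policy j"]) simp_all
qed

theorem theorem3:
  "\<exists>c::real. c > 0 \<and>
     (\<forall>H::nat. H \<ge> 2 \<longrightarrow>
      (\<forall>\<kappa>::nat \<Rightarrow> real. (\<forall>h\<ge>1. \<kappa> h \<ge> 2) \<longrightarrow>
       (\<exists>K0::nat. \<forall>K\<ge>K0. \<forall>Algo :: dataset \<Rightarrow> policy.
         \<exists>(M::mdp) (mu::policy).
           linear_mdp H M \<and>
           gap_set H M \<noteq> {} \<and> min_gap H M > 0 \<and>
           (\<exists>\<pi>. optimal_policy H M \<pi>) \<and>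
           (\<forall>\<pi>. optimal_policy H M \<pi> \<longrightarrow>
              (\<forall>h\<in>{1..H}. \<forall>s a. visit M \<pi> h s a \<le> \<kappa> h * visit M mu h s a)) \<and>
           measure_pmf.expectation (data_dist H K M mu) (\<lambda>D. SubOpt H M (Algo D))
             \<ge> c * Min (\<kappa> ` {1..H}) * real H ^ 2 / (real K * min_gap H M))))"
proof (intro exI[of _ "1/1024::real"] conjI allI impI)
  show "(0::real) < 1/1024"
    by simp
qed (rule exI, intro allI impI, rule hard_instance_lower_bound)

end
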